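(* Let $s,t,r\in\mathbb{N}$ with $s\leqslant rt$ and $r\leqslant st$. The orbit space $V_{s,t,r}/U(r)$ (with the quotient topology) is homeomorphic to $\mathcal{C}_{s,t,r}$ (with the subspace topology from $\mathbb{C}^{st\times st}$).
   Context: $V_{s,t,r}$ is the set of matrices $V=[A_1;A_2;\dots;A_r]\in\mathbb{C}^{rt\times s}$ (vertical stacking of blocks $A_i\in\mathbb{C}^{t\times s}$) such that $V^{\ast}V=\sum_iA_i^{\ast}A_i=I$ and $A_1,\dots,A_r$ are linearly independent over $\mathbb{C}$. The unitary group $U(r)$ acts on $V_{s,t,r}$ by $U\cdot V=(U\otimes I_t)V$, and $V_{s,t,r}/U(r)$ is the set of orbits. $\mathcal{C}_{s,t,r}$ is the set of positive semi-definite $C_{AB}\in\mathbb{C}^{st\times st}$ on $\mathbb{C}^s\otimes\mathbb{C}^t$ of rank $r$ with $\mathrm{tr}_BC_{AB}=\frac1sI$. *)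

theory Defs
  imports "HOL-Analysis.Analysis"
begin

text \<open>Matrices of size m x n are elements of complex^'n^'m (row index 'm, column index 'n).
  Dimensions s,t,r are the cardinalities of finite index types 's,'t,'r.
  A matrix V in C^{rt x s} is indexed by rows ('r \<times> 't), block i = rows (i,_).\<close>

definition quotient_topology :: "'a topology \<Rightarrow> ('a \<times> 'a) set \<Rightarrow> 'a set topology" where
  "quotient_topology X R =
     topology (\<lambda>U. U \<subseteq> topspace X // R \<and> openin X (\<Union>U))"

definition cmat_mult :: "complex^'n::finite^'m::finite \<Rightarrow> complex^'p::finite^'n \<Rightarrow> complex^'p^'m" where
  "cmat_mult A B = (\<chi> i k. \<Sum>j\<in>UNIV. A$i$j * B$j$k)"

definition adjoint_mat :: "complex^'n::finite^'m::finite \<Rightarrow> complex^'m^'n" where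
  "adjoint_mat A = (\<chi> i j. cnj (A$j$i))"

definition cid :: "complex^'n::finite^'n" where
  "cid = (\<chi> i j. if i = j then 1 else 0)"

definition unitary_mat :: "complex^'n::finite^'n \<Rightarrow> bool" where
  "unitary_mat U \<longleftrightarrow> cmat_mult (adjoint_mat U) U = cid"

definition block :: "complex^'s::finite^('r::finite \<times> 't::finite) \<Rightarrow> 'r \<Rightarrow> complex^'s^'t" where
  "block V i = (\<chi> j k. V$(i,j)$k)"

definition clin_indep_mats :: "('r::finite \<Rightarrow> complex^'s::finite^'t::finite) \<Rightarrow> bool" where
  "clin_indep_mats A \<longleftrightarrow>
     (\<forall>c::'r \<Rightarrow> complex. (\<forall>j k. (\<Sum>i\<in>UNIV. c i * A i $ j $ k) = 0) \<longrightarrow> (\<forall>i. c i = 0))"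

definition V_set :: "(complex^'s::finite^('r::finite \<times> 't::finite)) set" where
  "V_set = {V. cmat_mult (adjoint_mat V) V = cid \<and> clin_indep_mats (block V)}"

text \<open>Action of U(r): (U \<otimes> I_t) V.\<close>
definition kron_id_act :: "complex^'r::finite^'r::finite \<Rightarrow> complex^'s::finite^('r \<times> 't::finite) \<Rightarrow> complex^'s^('r \<times> 't)" where
  "kron_id_act U V = (\<chi> p k. \<Sum>i'\<in>UNIV. U$(fst p)$i' * V$(i', snd p)$k)"

definition orbit_rel :: "((complex^'s::finite^('r::finite \<times> 't::finite)) \<times> (complex^'s^('r \<times> 't))) set" where
  "orbit_rel = {(V, W). V \<in> V_set \<and> W \<in> V_set \<and>
       (\<exists>U::complex^'r^'r. unitary_mat U \<and> W = kron_id_act U V)}"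

definition hermitian_mat :: "complex^'n::finite^'n \<Rightarrow> bool" where
  "hermitian_mat C \<longleftrightarrow> adjoint_mat C = C"

definition psd_mat :: "complex^'n::finite^'n \<Rightarrow> bool" where
  "psd_mat C \<longleftrightarrow> hermitian_mat C \<and>
     (\<forall>x::'n \<Rightarrow> complex. 0 \<le> Re (\<Sum>i\<in>UNIV. \<Sum>j\<in>UNIV. cnj (x i) * C$i$j * x j))"

definition cindep_cols :: "complex^'n::finite^'m::finite \<Rightarrow> 'n set \<Rightarrow> bool" where
  "cindep_cols C S \<longleftrightarrow>
     (\<forall>c::'n \<Rightarrow> complex. (\<forall>i. (\<Sum>j\<in>S. c j * C$i$j) = 0) \<longrightarrow> (\<forall>j\<in>S. c j = 0))"

definition crank :: "complex^('n::finite)^'m::finite \<Rightarrow> nat" where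
  "crank C = Max (card ` {S. cindep_cols C S})"

text \<open>Partial trace over the second factor of C^s \<otimes> C^t (index (a,b)).\<close>
definition partial_trace_B :: "complex^('s::finite \<times> 't::finite)^('s \<times> 't) \<Rightarrow> complex^'s^'s" where
  "partial_trace_B C = (\<chi> a a'. \<Sum>b\<in>UNIV. C$(a,b)$(a',b))"

definition C_set :: "'r::finite itself \<Rightarrow> (complex^('s::finite \<times> 't::finite)^('s \<times> 't)) set" where
  "C_set _ = {C. psd_mat C \<and> crank C = CARD('r) \<and>
       partial_trace_B C = (\<chi> a a'. if a = a' then 1 / of_nat CARD('s) else 0)}"

end

theory Submission
  imports Defs
begin

(* Write M = choi_factor V for V rearranged as an st x r matrix, and choi V = M M^*.
   Then tr_B (choi V) = V^* V / s, and choi V has rank r iff M is injective iff the blocks A_i are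
   linearly independent, so choi maps V_{s,t,r} into C_{s,t,r}; it is onto because every positive
   semidefinite matrix of rank r factors as M M^* with M injective (a pivoted Cholesky
   decomposition). Two injective factors with M M^* = N N^* differ by a unitary, N = M Y, which is
   exactly the action of U(r); so the fibres of choi are the orbits. Finally choi is continuous and,
   as the restriction of a continuous map on the compact set of isometries to a saturated subset,
   closed. A closed continuous surjection is a quotient map, and the quotient of a space by the
   fibres of a quotient map is homeomorphic to its target. *)

lemma cmat_mult_eq_matrix_mult: "cmat_mult A B = A ** B"
  by (simp add: cmat_mult_def matrix_matrix_mult_def)

lemma cid_eq_mat_1: "cid = mat 1"
  by (simp add: cid_def mat_def)

lemma adjoint_mat_mult:
  "adjoint_mat (A ** B) = adjoint_mat B ** adjoint_mat (A :: complex^'n::finite^'m::finite)"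
  by (simp add: vec_eq_iff adjoint_mat_def matrix_matrix_mult_def mult.commute)

lemma adjoint_mat_adjoint_mat [simp]: "adjoint_mat (adjoint_mat A) = A"
  by (simp add: vec_eq_iff adjoint_mat_def)

definition cinner :: "complex^'n::finite \<Rightarrow> complex^'n \<Rightarrow> complex" where
  "cinner x y = (\<Sum>i\<in>UNIV. cnj (x$i) * y$i)"

lemma cinner_adjoint_right: "cinner x (adjoint_mat A *v y) = cinner (A *v x) y"
proof -
  have "cinner x (adjoint_mat A *v y) = (\<Sum>i\<in>UNIV. \<Sum>j\<in>UNIV. cnj (x$i) * (cnj (A$j$i) * y$j))"
    by (simp add: cinner_def matrix_vector_mult_def adjoint_mat_def sum_distrib_left)
  also have "\<dots> = (\<Sum>j\<in>UNIV. \<Sum>i\<in>UNIV. cnj (A$j$i * x$i) * y$j)"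
    by (subst sum.swap) (simp add: mult_ac)
  also have "\<dots> = cinner (A *v x) y"
    by (simp add: cinner_def matrix_vector_mult_def sum_distrib_right)
  finally show ?thesis .
qed

lemma cinner_self: "cinner x x = of_real (\<Sum>i\<in>UNIV. (cmod (x$i))\<^sup>2)"
  unfolding cinner_def of_real_sum
  by (rule sum.cong) (simp_all add: complex_norm_square mult.commute flip: of_real_power)

lemma cinner_self_eq_0_iff: "cinner x x = 0 \<longleftrightarrow> x = 0"
proof -
  have "cinner x x = 0 \<longleftrightarrow> (\<Sum>i\<in>UNIV. (cmod (x$i))\<^sup>2) = 0"
    by (simp only: cinner_self of_real_eq_0_iff)
  also have "\<dots> \<longleftrightarrow> x = 0"
    by (simp add: sum_nonneg_eq_0_iff vec_eq_iff)
  finally show ?thesis .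
qed

lemma Re_cinner_self_nonneg: "0 \<le> Re (cinner x x)"
  by (simp add: cinner_self sum_nonneg)

lemma adjoint_mult_self_kernel:
  fixes M :: "complex^'k::finite^'n::finite"
  assumes "(adjoint_mat M ** M) *v x = 0"
  shows "M *v x = 0"
proof -
  have "cinner (M *v x) (M *v x) = cinner x ((adjoint_mat M ** M) *v x)"
    by (simp add: cinner_adjoint_right flip: matrix_vector_mul_assoc)
  then show ?thesis using assms by (simp add: cinner_def cinner_self_eq_0_iff[symmetric])
qed

lemma invertible_adjoint_mult_self:
  fixes M :: "complex^'k::finite^'n::finite"
  assumes "\<And>x. M *v x = 0 \<Longrightarrow> x = 0"
  shows "invertible (adjoint_mat M ** M)"
proof -
  have "\<exists>G. G ** (adjoint_mat M ** M) = mat 1"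
    unfolding matrix_left_invertible_ker using assms adjoint_mult_self_kernel by blast
  then show ?thesis unfolding invertible_def using matrix_left_right_inverse by blast
qed

lemma psd_mat_mult_adjoint: "psd_mat (M ** adjoint_mat (M :: complex^'k::finite^'n::finite))"
  unfolding psd_mat_def hermitian_mat_def
proof (intro conjI allI)
  show "adjoint_mat (M ** adjoint_mat M) = M ** adjoint_mat M" by (simp add: adjoint_mat_mult)
next
  fix x :: "'n \<Rightarrow> complex"
  have "(\<Sum>i\<in>UNIV. \<Sum>j\<in>UNIV. cnj (x i) * (M ** adjoint_mat M) $ i $ j * x j) =
        cinner (vec_lambda x) ((M ** adjoint_mat M) *v vec_lambda x)"
    by (simp add: cinner_def matrix_vector_mult_def sum_distrib_left mult.assoc)
  also have "\<dots> = cinner (vec_lambda x) (adjoint_mat (adjoint_mat M) *v (adjoint_mat M *v vec_lambda x))"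
    by (simp add: matrix_vector_mul_assoc)
  finally have "(\<Sum>i\<in>UNIV. \<Sum>j\<in>UNIV. cnj (x i) * (M ** adjoint_mat M) $ i $ j * x j) =
        cinner (adjoint_mat M *v vec_lambda x) (adjoint_mat M *v vec_lambda x)"
    by (simp only: cinner_adjoint_right)
  then show "0 \<le> Re (\<Sum>i\<in>UNIV. \<Sum>j\<in>UNIV. cnj (x i) * (M ** adjoint_mat M) $ i $ j * x j)"
    by (simp only: Re_cinner_self_nonneg)
qed

definition independent_family :: "('k \<Rightarrow> complex^'n::finite) \<Rightarrow> 'k set \<Rightarrow> bool" where
  "independent_family u P \<longleftrightarrow> (\<forall>c. (\<Sum>k\<in>P. c k *s u k) = 0 \<longrightarrow> (\<forall>k\<in>P. c k = 0))"

lemma independent_family_iff: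
  assumes "finite P"
  shows "independent_family u P \<longleftrightarrow> inj_on u P \<and> vec.independent (u ` P)"
proof -
  have dependent_iff: "vec.dependent (u ` P) \<longleftrightarrow>
      (\<exists>d. (\<exists>v\<in>u ` P. d v \<noteq> 0) \<and> (\<Sum>v\<in>u ` P. d v *s v) = 0)"
    using assms by (intro vec.dependent_finite) simp
  show ?thesis
  proof
    assume ind: "independent_family u P"
    have inj: "inj_on u P"
    proof (rule inj_onI, rule ccontr)
      fix a b assume ab: "a \<in> P" "b \<in> P" "u a = u b" "a \<noteq> b"
      define c where "c k = (if k = a then 1 else if k = b then -1 else (0::complex))" for k
      have "(\<Sum>k\<in>P. c k *s u k) = (\<Sum>k\<in>{a,b}. c k *s u k)"
        by (rule sum.mono_neutral_right) (use ab assms in \<open>auto simp: c_def\<close>)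
      also have "\<dots> = 0" using ab by (simp add: c_def vec_eq_iff)
      finally have "c a = 0" using ind ab unfolding independent_family_def by blast
      then show False by (simp add: c_def)
    qed
    moreover have "vec.independent (u ` P)"
    proof
      assume "vec.dependent (u ` P)"
      then obtain d where d: "\<exists>v\<in>u ` P. d v \<noteq> 0" "(\<Sum>v\<in>u ` P. d v *s v) = 0"
        using dependent_iff by blast
      have "(\<Sum>k\<in>P. d (u k) *s u k) = 0" using d(2) by (simp add: sum.reindex[OF inj])
      then have "\<forall>k\<in>P. d (u k) = 0"
        using ind unfolding independent_family_def by metis
      then show False using d(1) by blast
    qed
    ultimately show "inj_on u P \<and> vec.independent (u ` P)" ..
  next
    assume h: "inj_on u P \<and> vec.independent (u ` P)"
    show "independent_family u P"
      unfolding independent_family_def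
    proof (intro allI impI ballI)
      fix c k assume c: "(\<Sum>k\<in>P. c k *s u k) = 0" and k: "k \<in> P"
      have "(\<Sum>v\<in>u ` P. c (inv_into P u v) *s v) = 0"
        using h c by (simp add: sum.reindex inv_into_f_f)
      then have "\<forall>v\<in>u ` P. c (inv_into P u v) = 0"
        using h dependent_iff by metis
      then show "c k = 0" using k h by (auto simp: inv_into_f_f)
    qed
  qed
qed

lemma cindep_cols_iff_independent_family:
  "cindep_cols C S \<longleftrightarrow> independent_family (\<lambda>j. column j C) S"
proof -
  have "(\<forall>i. (\<Sum>j\<in>S. c j * C$i$j) = 0) \<longleftrightarrow> (\<Sum>j\<in>S. c j *s column j C) = 0" for c
    by (simp add: vec_eq_iff column_def)
  then show ?thesis unfolding cindep_cols_def independent_family_def by simp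
qed

lemma crank_eq_dim_columns: "crank C = vec.dim (columns C)"
proof -
  have columns_eq: "columns C = range (\<lambda>j. column j C)" by (auto simp: columns_def)
  have le: "card S \<le> vec.dim (columns C)" if "cindep_cols C S" for S
  proof -
    have "inj_on (\<lambda>j. column j C) S" "vec.independent ((\<lambda>j. column j C) ` S)"
      using that by (simp_all add: cindep_cols_iff_independent_family independent_family_iff)
    moreover have "(\<lambda>j. column j C) ` S \<subseteq> columns C" by (auto simp: columns_eq)
    ultimately show ?thesis
      using vec.independent_card_le_dim by (metis card_image)
  qed
  obtain B where B: "B \<subseteq> columns C" "vec.independent B" "columns C \<subseteq> vec.span B"
    using vec.maximal_independent_subset by blast
  obtain S where S: "inj_on (\<lambda>j. column j C) S" "B = (\<lambda>j. column j C) ` S"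
    using B(1) unfolding columns_eq subset_image_inj by blast
  have "cindep_cols C S"
    using S B by (simp add: cindep_cols_iff_independent_family independent_family_iff)
  moreover have "vec.dim (columns C) = card S"
    using vec.dim_unique[OF B(1) B(3) B(2)] S by (simp add: card_image)
  ultimately have "vec.dim (columns C) \<in> card ` {S. cindep_cols C S}"
    by (simp add: image_iff) blast
  then show ?thesis
    unfolding crank_def using le by (intro Max_eqI) auto
qed

lemma crank_le_of_columns_in_span:
  assumes "columns A \<subseteq> vec.span (columns B)"
  shows "crank A \<le> crank B"
  using vec.dim_mono[OF assms] by (simp add: crank_eq_dim_columns)

lemma crank_mult_le_left: "crank (A ** B) \<le> crank (A :: complex^'n::finite^'m::finite)"
proof (rule crank_le_of_columns_in_span)
  have "A *v x \<in> vec.span (columns A)" for x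
    unfolding matrix_mult_sum
    by (intro vec.span_sum vec.span_scale vec.span_base) (auto simp: columns_def)
  moreover have "column j (A ** B) = A *v column j B" for j
    by (simp add: vec_eq_iff column_def matrix_matrix_mult_def matrix_vector_mult_def)
  ultimately show "columns (A ** B) \<subseteq> vec.span (columns A)"
    by (auto simp: columns_def)
qed

lemma crank_le_card: "crank (M :: complex^'k::finite^'n::finite) \<le> CARD('k)"
  unfolding crank_def by (rule Max.boundedI) (auto simp: card_mono cindep_cols_def)

lemma cindep_cols_UNIV_iff: "cindep_cols M UNIV \<longleftrightarrow> (\<forall>x. M *v x = 0 \<longrightarrow> x = 0)"
proof -
  have eq: "M *v vec_lambda c = 0 \<longleftrightarrow> (\<forall>i. (\<Sum>j\<in>UNIV. c j * M$i$j) = 0)" for c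
    by (simp add: matrix_vector_mult_def vec_eq_iff mult.commute)
  show ?thesis
    unfolding cindep_cols_def
  proof (intro iffI allI impI)
    fix x assume ind: "\<forall>c. (\<forall>i. (\<Sum>j\<in>UNIV. c j * M$i$j) = 0) \<longrightarrow> (\<forall>j\<in>UNIV. c j = 0)"
      and "M *v x = 0"
    then have "\<forall>i. (\<Sum>j\<in>UNIV. x$j * M$i$j) = 0" using eq[of "\<lambda>j. x$j"] by simp
    then show "x = 0" using ind[rule_format, of "\<lambda>j. x$j"] by (simp add: vec_eq_iff)
  next
    fix c assume "\<forall>x. M *v x = 0 \<longrightarrow> x = 0" and "\<forall>i. (\<Sum>j\<in>UNIV. c j * M$i$j) = 0"
    then have "vec_lambda c = 0" using eq[of c] by blast
    then show "\<forall>j\<in>UNIV. c j = 0" by (simp add: vec_eq_iff)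
  qed
qed

lemma crank_full_iff_injective:
  "crank (M :: complex^'k::finite^'n::finite) = CARD('k) \<longleftrightarrow> (\<forall>x. M *v x = 0 \<longrightarrow> x = 0)"
proof
  assume "crank M = CARD('k)"
  moreover have "crank M \<in> card ` {S. cindep_cols M S}"
    unfolding crank_def by (rule Max_in) (auto simp: cindep_cols_def)
  ultimately obtain S where "cindep_cols M S" "card S = CARD('k)" by auto
  then have "cindep_cols M UNIV" using card_subset_eq[of UNIV S] by auto
  then show "\<forall>x. M *v x = 0 \<longrightarrow> x = 0" by (simp add: cindep_cols_UNIV_iff)
next
  assume "\<forall>x. M *v x = 0 \<longrightarrow> x = 0"
  then have "CARD('k) \<in> card ` {S. cindep_cols M S}"
    using cindep_cols_UNIV_iff by blast
  then have "CARD('k) \<le> crank M"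
    unfolding crank_def by (intro Max_ge) auto
  then show "crank M = CARD('k)" using crank_le_card[of M] by simp
qed

lemma crank_mult_adjoint_full_iff:
  "crank (M ** adjoint_mat M) = CARD('k) \<longleftrightarrow> (\<forall>x. M *v x = 0 \<longrightarrow> x = 0)"
  for M :: "complex^'k::finite^'n::finite"
proof
  assume "crank (M ** adjoint_mat M) = CARD('k)"
  then have "crank M = CARD('k)"
    using crank_mult_le_left[of M "adjoint_mat M"] crank_le_card[of M] by simp
  then show "\<forall>x. M *v x = 0 \<longrightarrow> x = 0" by (simp add: crank_full_iff_injective)
next
  assume inj: "\<forall>x. M *v x = 0 \<longrightarrow> x = 0"
  then obtain G where G: "(adjoint_mat M ** M) ** G = mat 1"
    using invertible_adjoint_mult_self unfolding invertible_def by blast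
  have "M = M ** ((adjoint_mat M ** M) ** G)" by (simp add: G)
  also have "\<dots> = (M ** adjoint_mat M) ** (M ** G)" by (simp add: matrix_mul_assoc)
  finally have "M = (M ** adjoint_mat M) ** (M ** G)" .
  then have "crank M \<le> crank (M ** adjoint_mat M)"
    by (metis crank_mult_le_left)
  then show "crank (M ** adjoint_mat M) = CARD('k)"
    using inj crank_full_iff_injective[of M] crank_mult_le_left[of M "adjoint_mat M"] by simp
qed

lemma hermitian_mat_iff: "hermitian_mat C \<longleftrightarrow> (\<forall>i j. C$j$i = cnj (C$i$j))"
proof -
  have "cnj (C$j$i) = C$i$j \<longleftrightarrow> C$j$i = cnj (C$i$j)" for i j
    by (metis complex_cnj_cnj)
  then show ?thesis by (simp add: hermitian_mat_def adjoint_mat_def vec_eq_iff)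
qed

definition sesq_form :: "complex^'n::finite^'n \<Rightarrow> ('n \<Rightarrow> complex) \<Rightarrow> ('n \<Rightarrow> complex) \<Rightarrow> complex" where
  "sesq_form C x y = (\<Sum>i\<in>UNIV. \<Sum>j\<in>UNIV. cnj (x i) * C$i$j * y j)"

lemma psd_mat_iff: "psd_mat C \<longleftrightarrow> hermitian_mat C \<and> (\<forall>x. 0 \<le> Re (sesq_form C x x))"
  by (simp add: psd_mat_def sesq_form_def)

lemma sum_UNIV_single:
  fixes f :: "'n::finite \<Rightarrow> 'a::comm_monoid_add"
  assumes "\<And>i. i \<noteq> a \<Longrightarrow> f i = 0"
  shows "sum f UNIV = f a"
  using assms by (subst sum.mono_neutral_right[of UNIV "{a}"]) auto

lemma sum_UNIV_pair:
  fixes f :: "'n::finite \<Rightarrow> 'a::comm_monoid_add"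
  assumes "a \<noteq> b" "\<And>i. i \<noteq> a \<Longrightarrow> i \<noteq> b \<Longrightarrow> f i = 0"
  shows "sum f UNIV = f a + f b"
  using assms by (subst sum.mono_neutral_right[of UNIV "{a,b}"]) auto

lemma sesq_form_add:
  "sesq_form C (\<lambda>i. x i + e i) (\<lambda>i. x i + e i) =
     sesq_form C x x + sesq_form C x e + sesq_form C e x + sesq_form C e e"
  by (simp add: sesq_form_def ring_distribs sum.distrib)

lemma sesq_form_single_right:
  "sesq_form C x (\<lambda>j. if j = a then p else 0) = (\<Sum>i\<in>UNIV. cnj (x i) * C$i$a) * p"
proof -
  have "(\<Sum>j\<in>UNIV. cnj (x i) * C$i$j * (if j = a then p else 0)) = cnj (x i) * C$i$a * p" for i
    by (subst sum_UNIV_single[where a=a]) simp_all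
  then show ?thesis by (simp add: sesq_form_def sum_distrib_right)
qed

lemma sesq_form_single_left:
  "sesq_form C (\<lambda>i. if i = a then p else 0) y = cnj p * (\<Sum>j\<in>UNIV. C$a$j * y j)"
proof -
  have "(\<Sum>i\<in>UNIV. \<Sum>j\<in>UNIV. cnj (if i = a then p else 0) * C$i$j * y j) =
        (\<Sum>j\<in>UNIV. cnj p * C$a$j * y j)"
    by (subst sum_UNIV_single[where a=a]) simp_all
  then show ?thesis by (simp add: sesq_form_def sum_distrib_left mult.assoc)
qed

lemma sesq_form_single:
  "sesq_form C (\<lambda>i. if i = a then p else 0) (\<lambda>i. if i = a then p else 0) = cnj p * C$a$a * p"
  unfolding sesq_form_single_left by (subst sum_UNIV_single[where a=a]) simp_all

lemma sesq_form_pair: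
  assumes "a \<noteq> b"
  shows "sesq_form C (\<lambda>i. if i = a then p else if i = b then q else 0)
      (\<lambda>i. if i = a then p else if i = b then q else 0) =
     cnj p * C$a$a * p + cnj p * C$a$b * q + cnj q * C$b$a * p + cnj q * C$b$b * q"
proof -
  define y where "y i = (if i = a then p else if i = b then q else 0)" for i
  have "(\<Sum>j\<in>UNIV. cnj (y i) * C$i$j * y j) = cnj (y i) * C$i$a * p + cnj (y i) * C$i$b * q" for i
    using assms by (subst sum_UNIV_pair[OF assms(1)]) (auto simp: y_def)
  then show ?thesis
    unfolding sesq_form_def y_def[symmetric] using assms
    by (simp only:) (subst sum_UNIV_pair[OF assms(1)], auto simp: y_def)
qed

lemma psd_diag_real_nonneg:
  assumes "psd_mat C"
  shows "C$a$a = complex_of_real (Re (C$a$a))" and "0 \<le> Re (C$a$a)"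
proof -
  have "C$a$a = cnj (C$a$a)" using assms unfolding psd_mat_iff hermitian_mat_iff by blast
  then show "C$a$a = complex_of_real (Re (C$a$a))" by (simp add: complex_eq_iff)
  have "0 \<le> Re (sesq_form C (\<lambda>i. if i = a then 1 else 0) (\<lambda>i. if i = a then 1 else 0))"
    using assms unfolding psd_mat_iff by blast
  then show "0 \<le> Re (C$a$a)" by (simp only: sesq_form_single) simp
qed

lemma psd_zero_diag_imp_zero_row:
  assumes psd: "psd_mat C" and zero: "C$a$a = 0"
  shows "C$a$b = 0"
proof (rule ccontr)
  assume nz: "C$a$b \<noteq> 0"
  then have ab: "a \<noteq> b" using zero by auto
  define m where "m = (cmod (C$a$b))\<^sup>2"
  have m: "m > 0" using nz by (simp add: m_def)
  define t where "t = (Re (C$b$b) + 1) / (2 * m)"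
  define p where "p = - complex_of_real t * C$a$b"
  have e1: "cnj p * C$a$b = - complex_of_real (t * m)"
    unfolding p_def m_def by (simp add: complex_norm_square mult.commute flip: of_real_power)
  have "C$b$a = cnj (C$a$b)" using psd unfolding psd_mat_iff hermitian_mat_iff by blast
  then have e2: "C$b$a * p = - complex_of_real (t * m)"
    using arg_cong[OF e1, of cnj] by (simp add: mult.commute)
  \<comment> \<open>A large multiple of the off-diagonal entry at a makes the form negative at y.\<close>
  define y where "y i = (if i = a then p else if i = b then 1 else 0)" for i
  have "sesq_form C y y = cnj p * C$a$b + C$b$a * p + C$b$b"
    using sesq_form_pair[OF ab, where p=p and q=1 and C=C] zero by (simp add: y_def[abs_def])
  also have "\<dots> = - complex_of_real (2 * t * m) + C$b$b" by (simp add: e1 e2)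
  finally have "Re (sesq_form C y y) = - 2 * t * m + Re (C$b$b)" by simp
  also have "\<dots> = -1" using m by (simp add: t_def field_simps)
  moreover have "0 \<le> Re (sesq_form C y y)" using psd unfolding psd_mat_iff by blast
  ultimately show False by simp
qed

definition schur_complement :: "complex^'n::finite^'n \<Rightarrow> 'n \<Rightarrow> complex^'n^'n" where
  "schur_complement C a = (\<chi> i j. C$i$j - C$i$a * C$a$j / C$a$a)"

lemma columns_schur_complement_in_span:
  "columns (schur_complement C a) \<subseteq> vec.span (columns C)"
proof -
  have "column j (schur_complement C a) = column j C - (C$a$j / C$a$a) *s column a C" for j
    by (simp add: schur_complement_def column_def vec_eq_iff field_simps)
  moreover have "column j C \<in> vec.span (columns C)" for j
    by (rule vec.span_base) (auto simp: columns_def)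
  ultimately show ?thesis
    by (auto simp: columns_def intro!: vec.span_diff vec.span_scale)
qed

lemma psd_schur_complement:
  assumes psd: "psd_mat C" and nz: "C$a$a \<noteq> 0"
  shows "psd_mat (schur_complement C a)"
proof -
  have herm: "C$j$i = cnj (C$i$j)" for i j
    using psd unfolding psd_mat_iff hermitian_mat_iff by blast
  have real: "cnj (C$a$a) = C$a$a"
    using psd_diag_real_nonneg(1)[OF psd, of a] by (metis complex_cnj_complex_of_real)
  have "hermitian_mat (schur_complement C a)"
    unfolding hermitian_mat_iff schur_complement_def
  proof (intro allI)
    fix i j
    show "(\<chi> i j. C$i$j - C$i$a * C$a$j / C$a$a) $ j $ i =
        cnj ((\<chi> i j. C$i$j - C$i$a * C$a$j / C$a$a) $ i $ j)"
      using herm[of i j] herm[of i a] herm[of a j] real by (simp add: mult.commute)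
  qed
  moreover have "0 \<le> Re (sesq_form (schur_complement C a) y y)" for y
  proof -
    define \<beta> where "\<beta> = (\<Sum>j\<in>UNIV. C$a$j * y j)"
    have \<beta>_cnj: "(\<Sum>i\<in>UNIV. cnj (y i) * C$i$a) = cnj \<beta>"
      unfolding \<beta>_def by (simp add: herm[of _ a] mult.commute)
    define e where "e i = (if i = a then - \<beta> / C$a$a else 0)" for i
    \<comment> \<open>Completing the square: the form of the Schur complement at y is that of C at y + e.\<close>
    have "sesq_form (schur_complement C a) y y =
        sesq_form C y y - (\<Sum>i\<in>UNIV. \<Sum>j\<in>UNIV. (cnj (y i) * C$i$a) * (C$a$j * y j)) / C$a$a"
      by (simp add: sesq_form_def schur_complement_def ring_distribs sum_subtractf
          sum_divide_distrib mult_ac)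
    also have "\<dots> = sesq_form C y y - cnj \<beta> * \<beta> / C$a$a"
      by (simp add: sum_product[symmetric] \<beta>_cnj \<beta>_def)
    also have "\<dots> = sesq_form C (\<lambda>i. y i + e i) (\<lambda>i. y i + e i)"
      unfolding sesq_form_add unfolding e_def sesq_form_single sesq_form_single_right
        sesq_form_single_left \<beta>_cnj \<beta>_def[symmetric]
      using nz real by (simp add: field_simps)
    finally show ?thesis using psd unfolding psd_mat_iff by simp
  qed
  ultimately show ?thesis by (simp add: psd_mat_iff)
qed

(* The span condition is what forces card P = crank C (crank_rank_factorization). *)
definition rank_factorization :: "complex^'n::finite^'n \<Rightarrow> 'k set \<Rightarrow> ('k \<Rightarrow> complex^'n) \<Rightarrow> bool" where
  "rank_factorization C P u \<longleftrightarrow>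
     (\<forall>i j. C$i$j = (\<Sum>k\<in>P. u k $ i * cnj (u k $ j))) \<and> independent_family u P \<and>
     (\<forall>k\<in>P. u k \<in> vec.span (columns C))"

lemma crank_rank_factorization:
  assumes "rank_factorization C P u" and "finite P"
  shows "crank C = card P"
proof -
  have dec: "C$i$j = (\<Sum>k\<in>P. u k $ i * cnj (u k $ j))" for i j
    using assms(1) unfolding rank_factorization_def by blast
  have ind: "independent_family u P" and span: "u ` P \<subseteq> vec.span (columns C)"
    using assms(1) unfolding rank_factorization_def by blast+
  have "column j C = (\<Sum>k\<in>P. cnj (u k $ j) *s u k)" for j
    by (simp add: dec vec_eq_iff column_def mult.commute)
  moreover have "(\<Sum>k\<in>P. f k *s u k) \<in> vec.span (u ` P)" for f
    by (intro vec.span_sum vec.span_scale vec.span_base imageI)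
  ultimately have "columns C \<subseteq> vec.span (u ` P)"
    by (auto simp: columns_def)
  then have "vec.dim (columns C) = vec.dim (u ` P)"
    using vec.dim_mono[OF span] vec.dim_mono[of "columns C" "u ` P"] by simp
  also have "\<dots> = card P"
    using ind assms(2) by (simp add: independent_family_iff vec.dim_eq_card_independent card_image)
  finally show ?thesis by (simp add: crank_eq_dim_columns)
qed

lemma rank_factorization_insert_pivot:
  assumes psd: "psd_mat C" and nz: "C$a$a \<noteq> 0" and a: "a \<notin> P" and finP: "finite P"
    and fac: "rank_factorization (schur_complement C a) P u" and u_a: "\<forall>k\<in>P. u k $ a = 0"
  defines "w \<equiv> (\<chi> i. C$i$a / complex_of_real (sqrt (Re (C$a$a))))"
  shows "rank_factorization C (insert a P) (u(a := w))"
proof -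
  have dec: "schur_complement C a $ i $ j = (\<Sum>k\<in>P. u k $ i * cnj (u k $ j))" for i j
    using fac unfolding rank_factorization_def by blast
  have ind: "independent_family u P"
    and span: "\<forall>k\<in>P. u k \<in> vec.span (columns (schur_complement C a))"
    using fac unfolding rank_factorization_def by blast+
  define d where "d = Re (C$a$a)"
  have Caa: "C$a$a = complex_of_real d" using psd_diag_real_nonneg(1)[OF psd] by (simp add: d_def)
  then have "d \<noteq> 0" using nz by auto
  then have d: "d > 0" using psd_diag_real_nonneg(2)[OF psd, of a] by (simp add: d_def)
  have "cnj (C$j$a) = C$a$j" for j
    using psd unfolding psd_mat_iff hermitian_mat_iff by (metis complex_cnj_cnj)
  moreover have "complex_of_real (sqrt d) * complex_of_real (sqrt d) = complex_of_real d"
    using d by (simp flip: of_real_mult)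
  ultimately have ww: "w$i * cnj (w$j) = C$i$a * C$a$j / C$a$a" for i j
    unfolding w_def d_def[symmetric] by (simp add: Caa field_simps)
  have "C$i$j = (\<Sum>k\<in>insert a P. (u(a := w)) k $ i * cnj ((u(a := w)) k $ j))" for i j
  proof -
    have "C$i$j = schur_complement C a $ i $ j + C$i$a * C$a$j / C$a$a"
      by (simp add: schur_complement_def)
    also have "\<dots> = (\<Sum>k\<in>P. (u(a := w)) k $ i * cnj ((u(a := w)) k $ j)) + w$i * cnj (w$j)"
      using a by (simp add: dec ww) (rule sum.cong, auto)
    finally show ?thesis using a finP by simp
  qed
  moreover have "independent_family (u(a := w)) (insert a P)"
    unfolding independent_family_def
  proof (intro allI impI ballI)
    fix c k assume c: "(\<Sum>k\<in>insert a P. c k *s (u(a := w)) k) = 0" and k: "k \<in> insert a P"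
    have sum_P: "(\<Sum>k\<in>P. c k *s (if k = a then w else u k)) = (\<Sum>k\<in>P. c k *s u k)"
      using a by (intro sum.cong) auto
    \<comment> \<open>Only the pivot vector w is nonzero in coordinate a.\<close>
    have comp: "(\<Sum>k\<in>insert a P. c k *s (u(a := w)) k) $ a = c a * w$a"
      using a finP u_a by (simp, intro sum.neutral) auto
    moreover have "w$a \<noteq> 0" using nz d by (simp add: w_def flip: d_def)
    moreover have "c a * w$a = 0" using comp unfolding c by simp
    ultimately have ca: "c a = 0" by simp
    have "(\<Sum>k\<in>P. c k *s u k) = 0"
      using c a finP ca by (simp add: sum_P)
    then have "\<forall>k\<in>P. c k = 0" using ind unfolding independent_family_def by metis
    then show "c k = 0" using k ca by auto
  qed
  moreover have "\<forall>k\<in>insert a P. (u(a := w)) k \<in> vec.span (columns C)"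
  proof -
    have "vec.span (columns (schur_complement C a)) \<subseteq> vec.span (columns C)"
      by (rule vec.span_minimal[OF columns_schur_complement_in_span vec.subspace_span])
    moreover have "w = (1 / complex_of_real (sqrt d)) *s column a C"
      by (simp add: w_def d_def vec_eq_iff column_def)
    then have "w \<in> vec.span (columns C)"
      by (simp only:) (intro vec.span_scale vec.span_base, auto simp: columns_def)
    ultimately show ?thesis using span a by auto
  qed
  ultimately show ?thesis unfolding rank_factorization_def by blast
qed

lemma psd_rank_factorization_supported:
  fixes C :: "complex^'n::finite^'n"
  assumes "psd_mat C" and "\<forall>i j. i \<notin> I \<longrightarrow> C$i$j = 0"
  shows "\<exists>P u. P \<subseteq> I \<and> rank_factorization C P u \<and> (\<forall>k\<in>P. \<forall>i. i \<notin> I \<longrightarrow> u k $ i = 0)"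
  using finite[of I] assms
proof (induction I arbitrary: C rule: finite_induct)
  case empty
  then show ?case
    by (intro exI[of _ "{}"]) (auto simp: rank_factorization_def independent_family_def)
next
  case (insert a I)
  note psd = insert.prems(1) and supp = insert.prems(2)
  show ?case
  proof (cases "C$a$a = 0")
    case True
    then have "C$a$j = 0" for j by (rule psd_zero_diag_imp_zero_row[OF psd])
    then have "\<forall>i j. i \<notin> I \<longrightarrow> C$i$j = 0" using supp by (metis insert_iff)
    then obtain P u where "P \<subseteq> I" "rank_factorization C P u" "\<forall>k\<in>P. \<forall>i. i \<notin> I \<longrightarrow> u k $ i = 0"
      using insert.IH[OF psd] by blast
    then show ?thesis by (intro exI[of _ P] exI[of _ u]) auto
  next
    case False
    have "schur_complement C a $ i $ j = 0" if "i \<notin> I" for i j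
      using supp False that by (cases "i = a") (auto simp: schur_complement_def)
    then obtain P u where P: "P \<subseteq> I" and fac: "rank_factorization (schur_complement C a) P u"
      and supp_u: "\<forall>k\<in>P. \<forall>i. i \<notin> I \<longrightarrow> u k $ i = 0"
      using insert.IH[OF psd_schur_complement[OF psd False]] by blast
    have a: "a \<notin> P" using P insert.hyps(2) by blast
    define w where "w = (\<chi> i. C$i$a / complex_of_real (sqrt (Re (C$a$a))))"
    have "rank_factorization C (insert a P) (u(a := w))"
      unfolding w_def using supp_u insert.hyps(2) finite_subset[OF P insert.hyps(1)]
      by (intro rank_factorization_insert_pivot[OF psd False a _ fac]) auto
    moreover have "\<forall>k\<in>insert a P. \<forall>i. i \<notin> insert a I \<longrightarrow> (u(a := w)) k $ i = 0"
      using supp supp_u by (auto simp: w_def)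
    moreover have "insert a P \<subseteq> insert a I" using P by blast
    ultimately show ?thesis by blast
  qed
qed

lemma psd_factorization_injective:
  fixes C :: "complex^'n::finite^'n"
  assumes psd: "psd_mat C" and rank: "crank C = CARD('k::finite)"
  shows "\<exists>M :: complex^'k^'n. M ** adjoint_mat M = C \<and> (\<forall>x. M *v x = 0 \<longrightarrow> x = 0)"
proof -
  obtain P :: "'n set" and u where fac: "rank_factorization C P u"
    using psd_rank_factorization_supported[OF psd, of UNIV] by auto
  then have "card P = CARD('k)" using crank_rank_factorization[OF fac] rank by simp
  then obtain h where h: "bij_betw h (UNIV :: 'k set) P"
    by (metis finite finite_same_card_bij)
  have dec: "C$p$q = (\<Sum>k\<in>P. u k $ p * cnj (u k $ q))" for p q
    using fac unfolding rank_factorization_def by blast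
  have ind: "independent_family u P" using fac unfolding rank_factorization_def by blast
  define M :: "complex^'k^'n" where "M = (\<chi> p i. u (h i) $ p)"
  have "(M ** adjoint_mat M)$p$q = C$p$q" for p q
    unfolding dec sum.reindex_bij_betw[OF h, symmetric]
    by (simp add: M_def matrix_matrix_mult_def adjoint_mat_def)
  then have "M ** adjoint_mat M = C" by (simp add: vec_eq_iff)
  moreover have "x = 0" if "M *v x = 0" for x
  proof -
    define c where "c k = x $ inv_into UNIV h k" for k
    have hinv: "inv_into UNIV h (h i) = i" for i
      using h by (simp add: bij_betw_def inv_into_f_f)
    have "(\<Sum>k\<in>P. c k *s u k) = M *v x"
      unfolding sum.reindex_bij_betw[OF h, symmetric]
      by (simp add: M_def c_def hinv vec_eq_iff matrix_vector_mult_def mult.commute)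
    then have "\<forall>k\<in>P. c k = 0" using ind that unfolding independent_family_def by simp
    then show "x = 0" using h by (auto simp: c_def hinv vec_eq_iff bij_betwE dest: bspec[of _ _ "h _"])
  qed
  ultimately show ?thesis by blast
qed

(* M_{(a,b),i} = cnj ((A_i)_{b,a}) / sqrt s, so that choi V is, up to entrywise conjugation, the
   normalised Choi matrix of the channel with Kraus operators A_i. *)
definition choi_factor :: "complex^'s::finite^('r::finite \<times> 't::finite) \<Rightarrow> complex^'r^('s \<times> 't)" where
  "choi_factor V = (\<chi> p i. cnj (V$(i, snd p)$(fst p)) / complex_of_real (sqrt CARD('s)))"

definition choi :: "complex^'s::finite^('r::finite \<times> 't::finite) \<Rightarrow> complex^('s \<times> 't)^('s \<times> 't)" where
  "choi V = choi_factor V ** adjoint_mat (choi_factor V)"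

lemma bij_choi_factor: "bij (choi_factor :: complex^'s::finite^('r::finite \<times> 't::finite) \<Rightarrow> _)"
proof (rule o_bij)
  define g :: "complex^'r^('s \<times> 't) \<Rightarrow> complex^'s^('r \<times> 't)" where
    "g M = (\<chi> q a. cnj (M$(a, snd q)$(fst q) * complex_of_real (sqrt CARD('s))))" for M
  show "g \<circ> choi_factor = id" and "choi_factor \<circ> g = id"
    by (simp_all add: fun_eq_iff g_def choi_factor_def vec_eq_iff)
qed

lemma choi_factor_kron_id_act: "choi_factor (kron_id_act U V) = choi_factor V ** adjoint_mat U"
  by (simp add: choi_factor_def kron_id_act_def vec_eq_iff matrix_matrix_mult_def adjoint_mat_def
      sum_divide_distrib mult.commute)

lemma partial_trace_choi:
  "partial_trace_B (choi (V :: complex^'s::finite^('r::finite \<times> 't::finite))) =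
     (\<chi> a a'. (adjoint_mat V ** V)$a$a' / of_nat CARD('s))"
proof -
  define z where "z = complex_of_real (sqrt CARD('s))"
  have z: "z * cnj z = of_nat CARD('s)" by (simp add: z_def flip: of_real_mult)
  have "(\<Sum>b\<in>UNIV. \<Sum>i\<in>UNIV. cnj (V$(i,b)$a) / z * cnj (cnj (V$(i,b)$a') / z)) =
        (\<Sum>q\<in>UNIV. cnj (V$q$a) * V$q$a') / of_nat CARD('s)" for a a'
  proof -
    have "(\<Sum>b\<in>UNIV. \<Sum>i\<in>UNIV. cnj (V$(i,b)$a) / z * cnj (cnj (V$(i,b)$a') / z)) =
          (\<Sum>b\<in>UNIV. \<Sum>i\<in>UNIV. cnj (V$(i,b)$a) * V$(i,b)$a' / (z * cnj z))"
      by (simp add: field_simps)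
    also have "\<dots> = (\<Sum>i\<in>UNIV. \<Sum>b\<in>UNIV. cnj (V$(i,b)$a) * V$(i,b)$a') / of_nat CARD('s)"
      by (subst sum.swap) (simp add: z sum_divide_distrib)
    also have "\<dots> = (\<Sum>q\<in>UNIV. cnj (V$q$a) * V$q$a') / of_nat CARD('s)"
      by (simp add: sum.cartesian_product UNIV_Times_UNIV[symmetric] del: UNIV_Times_UNIV)
    finally show ?thesis .
  qed
  then show ?thesis
    by (simp add: partial_trace_B_def choi_def choi_factor_def matrix_matrix_mult_def
        adjoint_mat_def vec_eq_iff flip: z_def)
qed

lemma partial_trace_choi_eq_iff:
  "partial_trace_B (choi (V :: complex^'s::finite^('r::finite \<times> 't::finite))) =
     (\<chi> a a'. if a = a' then 1 / of_nat CARD('s) else 0) \<longleftrightarrow> adjoint_mat V ** V = mat 1"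
  by (auto simp: partial_trace_choi vec_eq_iff mat_def field_simps)

lemma clin_indep_mats_block_iff:
  "clin_indep_mats (block (V :: complex^'s::finite^('r::finite \<times> 't::finite))) \<longleftrightarrow>
     (\<forall>c. choi_factor V *v c = 0 \<longrightarrow> c = 0)"
proof -
  have key: "choi_factor V *v c = 0 \<longleftrightarrow> (\<forall>j k. (\<Sum>i\<in>UNIV. cnj (c$i) * block V i $ j $ k) = 0)" for c
  proof -
    have "(choi_factor V *v c)$(k,j) =
        cnj (\<Sum>i\<in>UNIV. cnj (c$i) * block V i $ j $ k) / complex_of_real (sqrt CARD('s))" for j k
      by (simp add: choi_factor_def block_def matrix_vector_mult_def sum_divide_distrib mult.commute)
    moreover have "complex_of_real (sqrt CARD('s)) \<noteq> 0" by simp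
    ultimately have "(choi_factor V *v c)$(k,j) = 0 \<longleftrightarrow> (\<Sum>i\<in>UNIV. cnj (c$i) * block V i $ j $ k) = 0"
      for j k by (simp only: divide_eq_0_iff complex_cnj_zero_iff simp_thms)
    then show ?thesis by (auto simp: vec_eq_iff)
  qed
  show ?thesis
    unfolding clin_indep_mats_def
  proof (intro iffI allI impI)
    fix c assume ind: "\<forall>d. (\<forall>j k. (\<Sum>i\<in>UNIV. d i * block V i $ j $ k) = 0) \<longrightarrow> (\<forall>i. d i = 0)"
      and "choi_factor V *v c = 0"
    then have "\<forall>j k. (\<Sum>i\<in>UNIV. cnj (c$i) * block V i $ j $ k) = 0" using key by blast
    then have "\<forall>i. cnj (c$i) = 0" using ind[rule_format, of "\<lambda>i. cnj (c$i)"] by blast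
    then show "c = 0" by (simp add: vec_eq_iff)
  next
    fix d :: "'r \<Rightarrow> complex" and i
    assume "\<forall>c. choi_factor V *v c = 0 \<longrightarrow> c = 0"
      and "\<forall>j k. (\<Sum>i\<in>UNIV. d i * block V i $ j $ k) = 0"
    then have "(\<chi> i. cnj (d i)) = 0" using key[of "\<chi> i. cnj (d i)"] by simp
    then show "d i = 0" by (simp add: vec_eq_iff)
  qed
qed

lemma V_set_iff:
  "V \<in> V_set \<longleftrightarrow> adjoint_mat V ** V = mat 1 \<and> (\<forall>c. choi_factor V *v c = 0 \<longrightarrow> c = 0)"
  by (simp add: V_set_def cmat_mult_eq_matrix_mult cid_eq_mat_1 clin_indep_mats_block_iff)

lemma choi_mem_C_set_iff:
  "choi (V :: complex^'s::finite^('r::finite \<times> 't::finite)) \<in> C_set TYPE('r) \<longleftrightarrow> V \<in> V_set"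
  by (simp add: C_set_def choi_def psd_mat_mult_adjoint crank_mult_adjoint_full_iff V_set_iff
      partial_trace_choi_eq_iff[unfolded choi_def] conj_commute)

lemma choi_image_V_set:
  "choi ` (V_set :: (complex^'s::finite^('r::finite \<times> 't::finite)) set) = C_set TYPE('r)"
proof
  show "choi ` (V_set :: (complex^'s^('r \<times> 't)) set) \<subseteq> C_set TYPE('r)"
    by (auto simp: choi_mem_C_set_iff)
next
  show "C_set TYPE('r) \<subseteq> choi ` (V_set :: (complex^'s^('r \<times> 't)) set)"
  proof
    fix C :: "complex^('s \<times> 't)^('s \<times> 't)" assume C: "C \<in> C_set TYPE('r)"
    then obtain M :: "complex^'r^('s \<times> 't)" where M: "M ** adjoint_mat M = C"
      using psd_factorization_injective[of C] by (auto simp: C_set_def)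
    obtain V :: "complex^'s^('r \<times> 't)" where "choi_factor V = M"
      using bij_choi_factor by (metis bij_pointE)
    then have "choi V = C" by (simp add: choi_def M)
    moreover have "V \<in> V_set" using C \<open>choi V = C\<close> choi_mem_C_set_iff[of V] by simp
    ultimately show "C \<in> choi ` (V_set :: (complex^'s^('r \<times> 't)) set)" by blast
  qed
qed

lemma mult_adjoint_eq_imp_unitary_factor:
  fixes M N :: "complex^'k::finite^'n::finite"
  assumes M: "\<forall>x. M *v x = 0 \<longrightarrow> x = 0" and N: "\<forall>x. N *v x = 0 \<longrightarrow> x = 0"
    and MN: "M ** adjoint_mat M = N ** adjoint_mat N"
  shows "\<exists>Y. Y ** adjoint_mat Y = mat 1 \<and> M ** Y = N"
proof -
  obtain H where H: "H ** (adjoint_mat M ** M) = mat 1" "(adjoint_mat M ** M) ** H = mat 1"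
    using invertible_adjoint_mult_self M unfolding invertible_def by blast
  obtain G where G: "(adjoint_mat N ** N) ** G = mat 1"
    using invertible_adjoint_mult_self N unfolding invertible_def by blast
  define Y where "Y = adjoint_mat M ** N ** G"
  have "M ** Y = (M ** adjoint_mat M) ** N ** G" by (simp add: Y_def matrix_mul_assoc)
  also have "\<dots> = N ** ((adjoint_mat N ** N) ** G)" by (simp add: MN matrix_mul_assoc)
  finally have MY: "M ** Y = N" by (simp add: G)
  have "mat 1 = (H ** (adjoint_mat M ** M)) ** ((adjoint_mat M ** M) ** H)" by (simp add: H)
  also have "\<dots> = H ** adjoint_mat M ** (M ** adjoint_mat M) ** M ** H"
    by (simp add: matrix_mul_assoc)
  also have "\<dots> = H ** adjoint_mat M ** (M ** Y ** adjoint_mat (M ** Y)) ** M ** H"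
    by (simp add: MY MN)
  also have "\<dots> = (H ** (adjoint_mat M ** M)) ** (Y ** adjoint_mat Y) ** ((adjoint_mat M ** M) ** H)"
    by (simp add: adjoint_mat_mult matrix_mul_assoc)
  also have "\<dots> = Y ** adjoint_mat Y" by (simp add: H)
  finally show ?thesis using MY by auto
qed

lemma orbit_rel_eq_choi_fibres:
  "(orbit_rel :: ((complex^'s::finite^('r::finite \<times> 't::finite)) \<times> _) set) =
     {(V, W). V \<in> V_set \<and> W \<in> V_set \<and> choi V = choi W}"
proof (intro set_eqI iffI; clarify)
  fix V W :: "complex^'s^('r \<times> 't)"
  assume "(V, W) \<in> orbit_rel"
  then obtain U :: "complex^'r^'r" where V: "V \<in> V_set" and W: "W \<in> V_set"
    and U: "adjoint_mat U ** U = mat 1" and WU: "W = kron_id_act U V"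
    by (auto simp: orbit_rel_def unitary_mat_def cmat_mult_eq_matrix_mult cid_eq_mat_1)
  have "choi W = choi_factor V ** (adjoint_mat U ** U) ** adjoint_mat (choi_factor V)"
    by (simp add: choi_def WU choi_factor_kron_id_act adjoint_mat_mult matrix_mul_assoc)
  then show "V \<in> V_set \<and> W \<in> V_set \<and> choi V = choi W" using V W U by (simp add: choi_def)
next
  fix V W :: "complex^'s^('r \<times> 't)"
  assume V: "V \<in> V_set" and W: "W \<in> V_set" and eq: "choi V = choi W"
  then obtain Y where Y: "Y ** adjoint_mat Y = mat 1" "choi_factor V ** Y = choi_factor W"
    using mult_adjoint_eq_imp_unitary_factor[of "choi_factor V" "choi_factor W"]
    by (auto simp: V_set_iff choi_def)
  have "unitary_mat (adjoint_mat Y)"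
    using Y(1) by (simp add: unitary_mat_def cmat_mult_eq_matrix_mult cid_eq_mat_1)
  moreover have "choi_factor W = choi_factor (kron_id_act (adjoint_mat Y) V)"
    using Y(2) by (simp add: choi_factor_kron_id_act)
  then have "W = kron_id_act (adjoint_mat Y) V"
    by (rule injD[OF bij_is_inj[OF bij_choi_factor]])
  ultimately show "(V, W) \<in> orbit_rel" using V W by (auto simp: orbit_rel_def)
qed

lemma istopology_quotient:
  assumes "equiv (topspace X) R"
  shows "istopology (\<lambda>U. U \<subseteq> topspace X // R \<and> openin X (\<Union>U))"
  unfolding istopology_def
proof (intro conjI allI impI ballI)
  fix S T assume S: "S \<subseteq> topspace X // R \<and> openin X (\<Union>S)"
    and T: "T \<subseteq> topspace X // R \<and> openin X (\<Union>T)"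
  then have "\<Union>(S \<inter> T) = \<Union>S \<inter> \<Union>T"
    using quotient_disj[OF assms] by blast
  then show "openin X (\<Union>(S \<inter> T))" using S T by auto
  show "S \<inter> T \<subseteq> topspace X // R" using S by auto
next
  fix K assume K: "\<forall>U\<in>K. U \<subseteq> topspace X // R \<and> openin X (\<Union>U)"
  then have "openin X (\<Union>(Union ` K))" by (intro openin_Union) auto
  moreover have "\<Union>(\<Union>K) = \<Union>(Union ` K)" by blast
  ultimately show "openin X (\<Union>(\<Union>K))" by simp
  show "\<Union>K \<subseteq> topspace X // R" using K by auto
qed

lemma openin_quotient_topology:
  assumes "equiv (topspace X) R"
  shows "openin (quotient_topology X R) U \<longleftrightarrow> U \<subseteq> topspace X // R \<and> openin X (\<Union>U)"
  unfolding quotient_topology_def using istopology_quotient[OF assms] by simp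

lemma topspace_quotient_topology:
  assumes "equiv (topspace X) R"
  shows "topspace (quotient_topology X R) = topspace X // R"
proof -
  have "openin (quotient_topology X R) (topspace X // R)"
    unfolding openin_quotient_topology[OF assms] using Union_quotient[OF assms] by simp
  then have "topspace X // R \<subseteq> topspace (quotient_topology X R)" by (rule openin_subset)
  moreover have "topspace (quotient_topology X R) \<subseteq> topspace X // R"
    unfolding topspace_def openin_quotient_topology[OF assms] by blast
  ultimately show ?thesis by blast
qed

lemma quotient_map_quotient_topology:
  assumes eqv: "equiv (topspace X) R"
  shows "quotient_map X (quotient_topology X R) (\<lambda>x. R``{x})"
  unfolding quotient_map_def topspace_quotient_topology[OF eqv]
proof (intro conjI allI impI)
  show "(\<lambda>x. R``{x}) ` topspace X = topspace X // R" by (auto simp: quotient_def)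
next
  fix U assume U: "U \<subseteq> topspace X // R"
  have "{x \<in> topspace X. R``{x} \<in> U} = \<Union>U"
  proof
    show "{x \<in> topspace X. R``{x} \<in> U} \<subseteq> \<Union>U"
      using equiv_class_self[OF eqv] by blast
    show "\<Union>U \<subseteq> {x \<in> topspace X. R``{x} \<in> U}"
      using U eqv by (auto elim!: quotientE simp: equiv_class_eq_iff dest: equiv_class_eq)
  qed
  then show "openin X {x \<in> topspace X. R``{x} \<in> U} \<longleftrightarrow> openin (quotient_topology X R) U"
    using U by (simp add: openin_quotient_topology[OF eqv])
qed

lemma quotient_topology_kernel_homeomorphic_space:
  assumes f: "quotient_map X Y f"
  defines "R \<equiv> {(x, y). x \<in> topspace X \<and> y \<in> topspace X \<and> f x = f y}"
  shows "quotient_topology X R homeomorphic_space Y"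
proof -
  have eqv: "equiv (topspace X) R" by (auto simp: R_def equiv_def refl_on_def sym_def trans_def)
  define F where "F E = f (SOME x. x \<in> E)" for E
  have F: "F (R``{x}) = f x" if "x \<in> topspace X" for x
  proof -
    define y where "y = (SOME y. y \<in> R``{x})"
    have "y \<in> R``{x}"
      unfolding y_def using equiv_class_self[OF eqv that] by (rule someI[where P = "\<lambda>y. y \<in> R``{x}"])
    then have "f y = f x" by (simp add: R_def)
    then show ?thesis unfolding F_def y_def[symmetric] .
  qed
  have "quotient_map X Y (F \<circ> (\<lambda>x. R``{x}))"
    using f F by (intro quotient_map_eq[OF f]) simp
  then have "quotient_map (quotient_topology X R) Y F"
    using quotient_map_compose_eq[OF quotient_map_quotient_topology[OF eqv]] by blast
  moreover have "inj_on F (topspace (quotient_topology X R))"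
    unfolding topspace_quotient_topology[OF eqv]
  proof (rule inj_onI)
    fix E1 E2 assume "E1 \<in> topspace X // R" "E2 \<in> topspace X // R" and eq: "F E1 = F E2"
    then obtain x1 x2 where x: "x1 \<in> topspace X" "E1 = R``{x1}" "x2 \<in> topspace X" "E2 = R``{x2}"
      by (auto elim!: quotientE)
    then have "(x1, x2) \<in> R" using eq F by (simp add: R_def)
    then show "E1 = E2" using x equiv_class_eq[OF eqv] by blast
  qed
  ultimately show ?thesis
    by (metis homeomorphic_map_def homeomorphic_map_imp_homeomorphic_space)
qed

lemma norm_isometry:
  fixes V :: "complex^'s::finite^'q::finite"
  assumes "adjoint_mat V ** V = mat 1"
  shows "norm V = sqrt CARD('s)"
proof -
  have "(\<Sum>q\<in>UNIV. (cmod (V$q$k))\<^sup>2) = 1" for k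
  proof -
    have "cinner (column k V) (column k V) = (adjoint_mat V ** V)$k$k"
      by (simp add: matrix_matrix_mult_def adjoint_mat_def cinner_def column_def)
    then have "cinner (column k V) (column k V) = 1" using assms by (simp add: mat_def)
    then have "complex_of_real (\<Sum>q\<in>UNIV. (cmod (column k V $ q))\<^sup>2) = 1"
      by (simp only: cinner_self)
    then show ?thesis by (simp only: of_real_eq_1_iff) (simp add: column_def)
  qed
  moreover have "norm V = sqrt (\<Sum>q\<in>UNIV. \<Sum>k\<in>UNIV. (cmod (V$q$k))\<^sup>2)"
    by (simp add: norm_vec_def L2_set_def sum_nonneg)
  ultimately show ?thesis by (subst (asm) sum.swap) simp
qed

lemma compact_isometries: "compact {V :: complex^'s::finite^'q::finite. adjoint_mat V ** V = mat 1}"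
proof (rule compact_eq_bounded_closed[THEN iffD2, OF conjI])
  show "bounded {V :: complex^'s^'q. adjoint_mat V ** V = mat 1}"
    unfolding bounded_iff using norm_isometry by fastforce
  have "continuous_on UNIV (\<lambda>V :: complex^'s^'q. \<chi> a b. \<Sum>q\<in>UNIV. cnj (V$q$a) * V$q$b)"
    by (intro continuous_intros)
  moreover have "adjoint_mat V ** V = (\<chi> a b. \<Sum>q\<in>UNIV. cnj (V$q$a) * V$q$b)" for V :: "complex^'s^'q"
    by (simp add: matrix_matrix_mult_def adjoint_mat_def)
  ultimately show "closed {V :: complex^'s^'q. adjoint_mat V ** V = mat 1}"
    by (auto intro: closed_Collect_eq)
qed

lemma continuous_on_choi: "continuous_on S (choi :: complex^'s::finite^('r::finite \<times> 't::finite) \<Rightarrow> _)"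
  unfolding choi_def[abs_def] choi_factor_def matrix_matrix_mult_def adjoint_mat_def
  by (intro continuous_intros) auto

lemma quotient_map_choi:
  "quotient_map (top_of_set (V_set :: (complex^'s::finite^('r::finite \<times> 't::finite)) set))
     (top_of_set (C_set TYPE('r))) choi"
proof -
  let ?V = "V_set :: (complex^'s^('r \<times> 't)) set"
  let ?I = "{V :: complex^'s^('r \<times> 't). adjoint_mat V ** V = mat 1}"
  have image: "choi ` ?V = C_set TYPE('r)" by (rule choi_image_V_set)
  then have "choi \<in> ?V \<rightarrow> C_set TYPE('r)" by blast
  then have "continuous_map (top_of_set ?V) (top_of_set (C_set TYPE('r))) choi"
    by (simp add: continuous_map_in_subtopology continuous_on_choi)
  \<comment> \<open>choi is closed on the compact set of isometries, and V_set is a saturated subset of it.\<close>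
  moreover have "closed_map (top_of_set ?I) euclidean choi"
    by (intro continuous_imp_closed_map compact_space_subtopology)
      (simp_all add: continuous_on_choi compact_isometries)
  then have "closed_map (subtopology (top_of_set ?I) ?V) (top_of_set (C_set TYPE('r))) choi"
    by (rule closed_map_restriction) (auto simp: choi_mem_C_set_iff V_set_iff)
  moreover have "subtopology (top_of_set ?I) ?V = top_of_set ?V"
    by (auto simp: subtopology_subtopology V_set_iff intro: arg_cong[where f = "subtopology euclidean"])
  ultimately show ?thesis
    using image by (intro continuous_closed_imp_quotient_map) auto
qed

theorem lemma8:
  assumes "CARD('s::finite) \<le> CARD('r::finite) * CARD('t::finite)"
    and "CARD('r) \<le> CARD('s) * CARD('t)"
  shows "quotient_topology (subtopology euclidean (V_set :: (complex^'s^('r \<times> 't)) set)) orbit_rel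
           homeomorphic_space
         subtopology euclidean (C_set TYPE('r) :: (complex^('s \<times> 't)^('s \<times> 't)) set)"
proof -
  \<comment> \<open>The dimension bounds only make both spaces nonempty.\<close>
  have qm: "quotient_map (top_of_set (V_set :: (complex^'s^('r \<times> 't)) set))
      (top_of_set (C_set TYPE('r))) choi"
    by (rule quotient_map_choi)
  show ?thesis
    using quotient_topology_kernel_homeomorphic_space[OF qm]
    by (simp add: orbit_rel_eq_choi_fibres)
qed

end
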